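(* Let $S$ be a real sequence (data sequence), let $Q=\{Q[1],\dots,Q[n]\}$ be a query sequence of length $n$, and let $S[i:j]$ be a subsequence of $S$ with $j-i+1=n$. Let $\epsilon\ge 0$, let $\omega\ge 1$ and $p\ge 1$ be integers with $p\omega\le n$. For $k=1,\dots,p$ define the query windows $\overline{q_k}=\overline{Q}[(k-1)\omega+1 : k\omega]$ (windows of the LD-sequence $\overline{Q}$) and the data windows $s_k=S[i+(k-1)\omega : i+k\omega-1]$, and let $\mathbb{S}_k$ be the set of all LD-windows of $s_k$, i.e. $\mathbb{S}_k=\{\overline{S_{\{i',j'\}}[a_k:b_k]} : S[i':j'] \text{ is a subsequence of } S \text{ containing } s_k=S[a_k:b_k]\}$. Let $T:\mathbb{R}^\omega\to\mathbb{R}^f$ be a lower-dimensional transformation satisfying $D(T(x),T(y))\le D(x,y)$ for all $x,y\in\mathbb{R}^\omega$. If $D(\overline{Q},\overline{S[i:j]})\le\epsilon$, then there exists $k\in\{1,\dots,p\}$ such that $$D\big(T(\overline{q_k}),\,\mathbb{M}(T(\mathbb{S}_k))\big)\le \epsilon/\sqrt{p}.$$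
   Context: $D(X,Y)=\sqrt{\sum_{t}|X[t]-Y[t]|^2}$ is the Euclidean distance between sequences (or vectors) of equal length. $S[a:b]$ denotes the contiguous subsequence $S[a],S[a+1],\dots,S[b]$; a subsequence $S[i':j']$ contains $S[a:b]$ if $i'\le a\le b\le j'$. Trend line: for a sequence $X$ indexed by $k=1,\dots,m$, its trend line is the least-squares line $g(k)=\alpha k+\beta$ with $\alpha=\frac{m\sum_k kX[k]-\sum_k k\sum_k X[k]}{m\sum_k k^2-(\sum_k k)^2}$, $\beta=\frac{\sum_k X[k]}{m}-\alpha\frac{\sum_k k}{m}$. The LD-sequence (linear detrending sequence) of $X$ is $\overline{X}$ with $\overline{X}[k]=X[k]-g(k)$. For a subsequence $S[i':j']$, its trend line $g$ is the least-squares line fitted to the points $(k,S[k])$, $k=i',\dots,j'$ (equivalently, fitted after reindexing; the detrended values are the same), and $\overline{S[i':j']}$ is the corresponding LD-sequence. LD-window: if $S[a:b]$ is contained in $S[i':j']$ and $g$ is the trend line of $S[i':j']$, the LD-window of $S[a:b]$ against $S[i':j']$, denoted $\overline{S_{\{i',j'\}}[a:b]}$, is the window with entries $S[k]-g(k)$ for $k=a,\dots,b$. LD-MBR: for a set $\mathbb{S}$ of LD-windows of a window, $\mathbb{M}(T(\mathbb{S}))$ is the minimum axis-parallel bounding box in $\mathbb{R}^f$ containing all points $T(\overline{s})$, $\overline{s}\in\mathbb{S}$. The distance $D(x,\mathbb{M})$ between a point $x$ and a box $\mathbb{M}$ is $\min_{y\in\mathbb{M}}D(x,y)$. *)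

theory Defs
  imports Complex_Main
begin

text \<open>Sequences/vectors of a given length are represented as real lists.
  Data sequence S is a function on indices 1..N (N = its length).\<close>

definition dist_l :: "real list \<Rightarrow> real list \<Rightarrow> real" where
  "dist_l x y = sqrt (\<Sum>t<length x. (x ! t - y ! t)^2)"

definition trend_alpha :: "real list \<Rightarrow> real" where
  "trend_alpha X = (let m = length X in
     (real m * (\<Sum>k=1..m. real k * X ! (k - 1)) - (\<Sum>k=1..m. real k) * (\<Sum>k=1..m. X ! (k - 1)))
     / (real m * (\<Sum>k=1..m. (real k)^2) - (\<Sum>k=1..m. real k)^2))"

definition trend_beta :: "real list \<Rightarrow> real" where
  "trend_beta X = (let m = length X in
     (\<Sum>k=1..m. X ! (k - 1)) / real m - trend_alpha X * (\<Sum>k=1..m. real k) / real m)"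

definition LD :: "real list \<Rightarrow> real list" where
  "LD X = map (\<lambda>k. X ! (k - 1) - (trend_alpha X * real k + trend_beta X)) [1..<length X + 1]"

definition subseq :: "(nat \<Rightarrow> real) \<Rightarrow> nat \<Rightarrow> nat \<Rightarrow> real list" where
  "subseq S a b = map S [a..<b + 1]"

text \<open>LD-window of S[a:b] against S[i':j'] (trend line fitted on the reindexed
  subsequence S[i':j'], position k corresponds to reindexed k - i' + 1).\<close>
definition ld_window :: "(nat \<Rightarrow> real) \<Rightarrow> nat \<Rightarrow> nat \<Rightarrow> nat \<Rightarrow> nat \<Rightarrow> real list" where
  "ld_window S i' j' a b =
     (let X = subseq S i' j' in
      map (\<lambda>k. S k - (trend_alpha X * real (k - i' + 1) + trend_beta X)) [a..<b + 1])"

definition ld_windows :: "(nat \<Rightarrow> real) \<Rightarrow> nat \<Rightarrow> nat \<Rightarrow> nat \<Rightarrow> real list set" where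
  "ld_windows S N a b = {ld_window S i' j' a b | i' j'. 1 \<le> i' \<and> i' \<le> a \<and> b \<le> j' \<and> j' \<le> N}"

definition MBR :: "nat \<Rightarrow> real list set \<Rightarrow> real list set" where
  "MBR f P = {y. length y = f \<and>
     (\<forall>d<f. (INF x\<in>P. x ! d) \<le> y ! d \<and> y ! d \<le> (SUP x\<in>P. x ! d))}"

definition dist_box :: "real list \<Rightarrow> real list set \<Rightarrow> real" where
  "dist_box x M = (INF y\<in>M. dist_l x y)"

end

theory Submission
  imports Defs
begin

text \<open>
  Split the first \<open>p\<omega>\<close> positions of the two LD-sequences \<open>LD Q\<close> and
  \<open>LD S[i:j]\<close> into \<open>p\<close> consecutive blocks of length \<open>\<omega>\<close>. The squared distance
  of the whole sequences bounds the sum of the \<open>p\<close> squared block distances,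
  so by averaging some block \<open>k\<close> has distance at most \<open>\<epsilon>/\<surd>p\<close>.
  The \<open>k\<close>-th block of \<open>LD S[i:j]\<close> is the LD-window of the data window \<open>s\<^sub>k\<close>
  against the enclosing subsequence \<open>S[i:j]\<close>, hence a member of \<open>\<bbbS>\<^sub>k\<close>; its image
  under \<open>T\<close> lies in the bounding box \<open>\<bbbM>(T(\<bbbS>\<^sub>k))\<close>. Since \<open>T\<close> is contractive,
  the distance from \<open>T(q\<^sub>k)\<close> to the box is at most \<open>\<epsilon>/\<surd>p\<close>.
\<close>

definition block :: "nat \<Rightarrow> nat \<Rightarrow> 'a list \<Rightarrow> 'a list" where
  "block \<omega> m x = take \<omega> (drop (m * \<omega>) x)"

lemma dist_l_nonneg: "0 \<le> dist_l x y"
  by (simp add: dist_l_def sum_nonneg)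

lemma dist_l_squared:
  "(dist_l x y)\<^sup>2 = (\<Sum>t<length x. (x ! t - y ! t)\<^sup>2)"
  by (simp add: dist_l_def sum_nonneg)

lemma dist_l_block_squared:
  assumes "(m + 1) * \<omega> \<le> length x" "length y = length x"
  shows "(dist_l (block \<omega> m x) (block \<omega> m y))\<^sup>2
         = (\<Sum>t\<in>{m * \<omega>..<m * \<omega> + \<omega>}. (x ! t - y ! t)\<^sup>2)"
proof -
  have "length (block \<omega> m x) = \<omega>"
    and "\<And>t. t < \<omega> \<Longrightarrow> block \<omega> m x ! t = x ! (m * \<omega> + t)"
    and "\<And>t. t < \<omega> \<Longrightarrow> block \<omega> m y ! t = y ! (m * \<omega> + t)"
    using assms by (auto simp: block_def)
  then have "(dist_l (block \<omega> m x) (block \<omega> m y))\<^sup>2 = (\<Sum>t<\<omega>. (x ! (m * \<omega> + t) - y ! (m * \<omega> + t))\<^sup>2)"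
    by (simp add: dist_l_squared)
  also have "\<dots> = (\<Sum>t\<in>{m * \<omega>..<m * \<omega> + \<omega>}. (x ! t - y ! t)\<^sup>2)"
    using sum.shift_bounds_nat_ivl[of "\<lambda>t. (x ! t - y ! t)\<^sup>2" 0 "m * \<omega>" \<omega>]
    by (simp add: lessThan_atLeast0 add.commute)
  finally show ?thesis .
qed

lemma exists_le_average:
  fixes B :: "nat \<Rightarrow> real"
  assumes "p \<ge> 1"
  shows "\<exists>m<p. B m \<le> (\<Sum>m'<p. B m') / real p"
proof -
  have ne: "B ` {..<p} \<noteq> {}" using assms by (auto simp: lessThan_empty_iff)
  obtain m where m: "m < p" "B m = Min (B ` {..<p})"
    using Min_in[OF _ ne] by auto
  have "(\<Sum>m'<p. B m) \<le> (\<Sum>m'<p. B m')"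
    using m by (intro sum_mono) simp
  with m assms show ?thesis
    by (intro exI[of _ m]) (simp add: field_simps)
qed

lemma exists_close_block:
  assumes "length y = length x" "p \<ge> 1" "p * \<omega> \<le> length x"
  shows "\<exists>m<p. dist_l (block \<omega> m x) (block \<omega> m y) \<le> dist_l x y / sqrt (real p)"
proof -
  define B where "B m = (dist_l (block \<omega> m x) (block \<omega> m y))\<^sup>2" for m
  have B_block: "B m = (\<Sum>t\<in>{m * \<omega>..<m * \<omega> + \<omega>}. (x ! t - y ! t)\<^sup>2)" if "m < p" for m
  proof -
    have "(m + 1) * \<omega> \<le> p * \<omega>" using that by (intro mult_le_mono1) simp
    then show ?thesis using assms unfolding B_def by (intro dist_l_block_squared) auto
  qed
  have "(\<Sum>m<p. B m) = (\<Sum>t<p * \<omega>. (x ! t - y ! t)\<^sup>2)"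
    using B_block sum.nat_group[of "\<lambda>t. (x ! t - y ! t)\<^sup>2" \<omega> p] by simp
  also have "\<dots> \<le> (\<Sum>t<length x. (x ! t - y ! t)\<^sup>2)"
    using assms by (intro sum_mono2) auto
  also have "\<dots> = (dist_l x y)\<^sup>2" by (rule dist_l_squared[symmetric])
  finally have sum_B: "(\<Sum>m<p. B m) \<le> (dist_l x y)\<^sup>2" .
  obtain m where m: "m < p" "B m \<le> (\<Sum>m'<p. B m') / real p"
    using exists_le_average[OF assms(2)] by blast
  have "B m \<le> (dist_l x y / sqrt (real p))\<^sup>2"
    using m sum_B assms(2) by (simp add: power_divide divide_right_mono order_trans)
  then have "dist_l (block \<omega> m x) (block \<omega> m y) \<le> dist_l x y / sqrt (real p)"
    unfolding B_def by (rule power2_le_imp_le) (simp add: dist_l_nonneg)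
  with m show ?thesis by blast
qed

lemma length_LD: "length (LD X) = length X"
  by (simp add: LD_def del: upt_Suc)

lemma nth_LD: "t < length X \<Longrightarrow> LD X ! t = X ! t - (trend_alpha X * real (t + 1) + trend_beta X)"
  by (simp add: LD_def del: upt_Suc)

lemma length_subseq: "a \<le> b \<Longrightarrow> length (subseq S a b) = b - a + 1"
  by (simp add: subseq_def del: upt_Suc)

text \<open>A block of the LD-sequence of \<open>S[i:j]\<close> is exactly the LD-window of the
  corresponding data window against \<open>S[i:j]\<close>: detrending the whole subsequence
  and then cutting equals cutting with the trend line of the whole subsequence.\<close>
lemma block_LD_subseq:
  assumes "i \<le> j" "(m + 1) * \<omega> \<le> j - i + 1" "\<omega> \<ge> 1"
  shows "block \<omega> m (LD (subseq S i j)) = ld_window S i j (i + m * \<omega>) (i + m * \<omega> + \<omega> - 1)"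
proof (rule nth_equalityI)
  have len: "length (subseq S i j) = j - i + 1" using assms by (simp add: length_subseq)
  then show "length (block \<omega> m (LD (subseq S i j)))
             = length (ld_window S i j (i + m * \<omega>) (i + m * \<omega> + \<omega> - 1))"
    using assms by (simp add: block_def length_LD ld_window_def Let_def del: upt_Suc)
  fix t assume "t < length (block \<omega> m (LD (subseq S i j)))"
  then have t: "t < \<omega>" "m * \<omega> + t < j - i + 1" using len by (auto simp: block_def length_LD)
  have "subseq S i j ! (m * \<omega> + t) = S (i + m * \<omega> + t)"
    using t assms by (simp add: subseq_def add.assoc del: upt_Suc)
  then have "block \<omega> m (LD (subseq S i j)) ! t
        = S (i + m * \<omega> + t) - (trend_alpha (subseq S i j) * real (m * \<omega> + t + 1) + trend_beta (subseq S i j))"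
    using t len by (simp add: block_def length_LD nth_LD)
  then show "block \<omega> m (LD (subseq S i j)) ! t
             = ld_window S i j (i + m * \<omega>) (i + m * \<omega> + \<omega> - 1) ! t"
    using t assms by (simp add: ld_window_def Let_def algebra_simps del: upt_Suc)
qed

text \<open>Only finitely many enclosing subsequences exist, so \<open>\<bbbS>\<^sub>k\<close> is finite.\<close>
lemma finite_ld_windows: "finite (ld_windows S N a b)"
proof -
  have "ld_windows S N a b \<subseteq> (\<lambda>(i', j'). ld_window S i' j' a b) ` ({1..a} \<times> {b..N})"
    unfolding ld_windows_def by auto
  then show ?thesis by (rule finite_subset) auto
qed

lemma mem_MBR:
  assumes "finite P" "x \<in> P" "length x = f"
  shows "x \<in> MBR f P"
  unfolding MBR_def
proof (intro CollectI conjI allI impI)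
  fix d
  have "bdd_below ((\<lambda>x. x ! d) ` P)" "bdd_above ((\<lambda>x. x ! d) ` P)"
    using assms(1) by auto
  then show "(INF x\<in>P. x ! d) \<le> x ! d" "x ! d \<le> (SUP x\<in>P. x ! d)"
    using assms(2) by (auto intro: cINF_lower cSUP_upper)
qed (use assms(3) in simp)

lemma dist_box_le: "y \<in> M \<Longrightarrow> dist_box x M \<le> dist_l x y"
  unfolding dist_box_def
  by (rule cINF_lower) (auto intro: bdd_belowI[where m=0] simp: dist_l_nonneg)

theorem theorem1:
  fixes S :: "nat \<Rightarrow> real" and N :: nat
    and Q :: "real list" and n i j :: nat
    and \<epsilon> :: real and \<omega> p f :: nat
    and T :: "real list \<Rightarrow> real list"
  assumes "length Q = n"
    and "1 \<le> i" and "i \<le> j" and "j \<le> N" and "j - i + 1 = n"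
    and "\<epsilon> \<ge> 0" and "\<omega> \<ge> 1" and "p \<ge> 1" and "p * \<omega> \<le> n"
    and "\<And>x. length x = \<omega> \<Longrightarrow> length (T x) = f"
    and "\<And>x y. length x = \<omega> \<Longrightarrow> length y = \<omega> \<Longrightarrow> dist_l (T x) (T y) \<le> dist_l x y"
    and "dist_l (LD Q) (LD (subseq S i j)) \<le> \<epsilon>"
  shows "\<exists>k\<in>{1..p}.
     dist_box (T (take \<omega> (drop ((k - 1) * \<omega>) (LD Q))))
       (MBR f (T ` ld_windows S N (i + (k - 1) * \<omega>) (i + k * \<omega> - 1)))
     \<le> \<epsilon> / sqrt (real p)"
proof -
  let ?L = "LD Q" and ?R = "LD (subseq S i j)"
  have len: "length ?L = n" "length ?R = n"
    using assms(1,3,5) by (simp_all add: length_LD length_subseq)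
  obtain m where m: "m < p"
    and close: "dist_l (block \<omega> m ?L) (block \<omega> m ?R) \<le> dist_l ?L ?R / sqrt (real p)"
    using exists_close_block[of ?R ?L p \<omega>] len assms(8,9) by auto
  have inside: "(m + 1) * \<omega> \<le> n"
    using m assms(9) by (metis Suc_eq_plus1 Suc_leI le_trans mult_le_mono1)
  define a b where "a = i + m * \<omega>" and "b = i + (m + 1) * \<omega> - 1"
  have "block \<omega> m ?R = ld_window S i j a b"
    using block_LD_subseq[of i j m \<omega> S] assms(3,5,7) inside
    by (simp add: a_def b_def algebra_simps)
  moreover have "1 \<le> i" "i \<le> a" "b \<le> j" "j \<le> N"
    using assms(2-5) inside unfolding a_def b_def by linarith+
  ultimately have window: "block \<omega> m ?R \<in> ld_windows S N a b"
    unfolding ld_windows_def by blast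
  have lengths: "length (block \<omega> m ?L) = \<omega>" "length (block \<omega> m ?R) = \<omega>"
    using inside len by (auto simp: block_def)
  have "T (block \<omega> m ?R) \<in> MBR f (T ` ld_windows S N a b)"
    using window lengths assms(10) by (intro mem_MBR) (auto simp: finite_ld_windows)
  then have "dist_box (T (block \<omega> m ?L)) (MBR f (T ` ld_windows S N a b))
             \<le> dist_l (T (block \<omega> m ?L)) (T (block \<omega> m ?R))"
    by (rule dist_box_le)
  also have "\<dots> \<le> dist_l (block \<omega> m ?L) (block \<omega> m ?R)"
    by (rule assms(11)[OF lengths])
  also have "\<dots> \<le> \<epsilon> / sqrt (real p)"
    by (rule order_trans[OF close divide_right_mono[OF assms(12)]]) simp
  finally have "dist_box (T (block \<omega> m ?L)) (MBR f (T ` ld_windows S N a b)) \<le> \<epsilon> / sqrt (real p)" .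
  moreover have "m + 1 \<in> {1..p}" using m by simp
  ultimately show ?thesis
    unfolding block_def a_def b_def by (intro bexI[of _ "m + 1"]) simp_all
qed

end
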